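(* Let $\mathbb{J}=\mathbb{N}\times(\mathbb{N}\cup\{\omega\})$ with the order $(j,k)\le(m,n)$ iff either ($j=m$ and $k\le n$) or ($n=\omega$ and $k\le m$), where $\mathbb{N}\cup\{\omega\}$ is ordered with $\omega$ above all naturals. Then $\mathbb{J}$ is a dcpo, its Scott space $\Sigma\mathbb{J}$ is coherent and $S^{\ast}$-well-filtered, but $\Sigma\mathbb{J}$ is not a strong $d$-space and hence not strongly well-filtered.
   Context: $\Sigma P$ is a poset $P$ with its Scott topology (a set $U$ is Scott open if $U={\uparrow}U$ and every directed $D$ with existing supremum $\bigvee D\in U$ meets $U$). For a space $X$, ${\uparrow}$ is taken in the specialization order ($x\le y$ iff $x\in cl\{y\}$); $K(X)$ is the set of nonempty compact saturated (= upper) subsets; a family in $K(X)$ is filtered if any two members contain a common member. $X$ is coherent if the intersection of two compact saturated sets is compact. $X$ is a strong $d$-space if for every directed $D\subseteq X$, $x\in X$ and open $U$, $\bigcap_{d\in D}{\uparrow}d\cap{\uparrow}x\subseteq U$ implies ${\uparrow}d\cap{\uparrow}x\subseteq U$ for some $d\in D$. $X$ is strongly well-filtered if for every filtered $\{K_i\}\subseteq K(X)$, $G\in K(X)$ and open $U$, $\bigcap_i K_i\cap G\subseteq U$ implies $K_i\cap G\subseteq U$ for some $i$; $X$ is $S^{\ast}$-well-filtered if the same holds for all nonempty open $U$. *)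

theory Defs
  imports "HOL-Analysis.Analysis" "HOL-Library.Extended_Nat"
begin

definition directed_rel :: "('a \<Rightarrow> 'a \<Rightarrow> bool) \<Rightarrow> 'a set \<Rightarrow> bool" where
  "directed_rel le D \<longleftrightarrow> D \<noteq> {} \<and> (\<forall>x\<in>D. \<forall>y\<in>D. \<exists>z\<in>D. le x z \<and> le y z)"

definition is_sup_rel :: "('a \<Rightarrow> 'a \<Rightarrow> bool) \<Rightarrow> 'a set \<Rightarrow> 'a \<Rightarrow> bool" where
  "is_sup_rel le D s \<longleftrightarrow> (\<forall>d\<in>D. le d s) \<and> (\<forall>u. (\<forall>d\<in>D. le d u) \<longrightarrow> le s u)"

definition is_dcpo :: "('a \<Rightarrow> 'a \<Rightarrow> bool) \<Rightarrow> bool" where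
  "is_dcpo le \<longleftrightarrow> partial_order_on UNIV {(x, y). le x y}
     \<and> (\<forall>D. directed_rel le D \<longrightarrow> (\<exists>s. is_sup_rel le D s))"

definition scott_open :: "('a \<Rightarrow> 'a \<Rightarrow> bool) \<Rightarrow> 'a set \<Rightarrow> bool" where
  "scott_open le U \<longleftrightarrow> (\<forall>x y. x \<in> U \<and> le x y \<longrightarrow> y \<in> U)
     \<and> (\<forall>D s. directed_rel le D \<and> is_sup_rel le D s \<and> s \<in> U \<longrightarrow> D \<inter> U \<noteq> {})"

definition scott_topology :: "('a \<Rightarrow> 'a \<Rightarrow> bool) \<Rightarrow> 'a topology" where
  "scott_topology le = topology (scott_open le)"

definition spec_le :: "'a topology \<Rightarrow> 'a \<Rightarrow> 'a \<Rightarrow> bool" where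
  "spec_le X x y \<longleftrightarrow> x \<in> topspace X \<and> y \<in> topspace X \<and> x \<in> X closure_of {y}"

definition upset :: "'a topology \<Rightarrow> 'a set \<Rightarrow> 'a set" where
  "upset X A = {y \<in> topspace X. \<exists>x\<in>A. spec_le X x y}"

definition saturated :: "'a topology \<Rightarrow> 'a set \<Rightarrow> bool" where
  "saturated X A \<longleftrightarrow> A \<subseteq> topspace X \<and> upset X A = A"

definition Kset :: "'a topology \<Rightarrow> 'a set set" where
  "Kset X = {K. K \<noteq> {} \<and> compactin X K \<and> saturated X K}"

definition filtered_family :: "'a set set \<Rightarrow> bool" where
  "filtered_family \<K> \<longleftrightarrow> \<K> \<noteq> {} \<and> (\<forall>K1\<in>\<K>. \<forall>K2\<in>\<K>. \<exists>K3\<in>\<K>. K3 \<subseteq> K1 \<inter> K2)"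

definition coherent_space :: "'a topology \<Rightarrow> bool" where
  "coherent_space X \<longleftrightarrow> (\<forall>K L. compactin X K \<and> saturated X K \<and> compactin X L \<and> saturated X L
      \<longrightarrow> compactin X (K \<inter> L))"

definition strong_d_space :: "'a topology \<Rightarrow> bool" where
  "strong_d_space X \<longleftrightarrow> (\<forall>D x U. D \<subseteq> topspace X \<and> directed_rel (spec_le X) D \<and> x \<in> topspace X
      \<and> openin X U \<and> (\<Inter>d\<in>D. upset X {d}) \<inter> upset X {x} \<subseteq> U
      \<longrightarrow> (\<exists>d\<in>D. upset X {d} \<inter> upset X {x} \<subseteq> U))"

definition strongly_well_filtered :: "'a topology \<Rightarrow> bool" where
  "strongly_well_filtered X \<longleftrightarrow> (\<forall>\<K> G U. \<K> \<subseteq> Kset X \<and> filtered_family \<K> \<and> G \<in> Kset X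
      \<and> openin X U \<and> \<Inter>\<K> \<inter> G \<subseteq> U \<longrightarrow> (\<exists>K\<in>\<K>. K \<inter> G \<subseteq> U))"

definition S_star_well_filtered :: "'a topology \<Rightarrow> bool" where
  "S_star_well_filtered X \<longleftrightarrow> (\<forall>\<K> G U. \<K> \<subseteq> Kset X \<and> filtered_family \<K> \<and> G \<in> Kset X
      \<and> openin X U \<and> U \<noteq> {} \<and> \<Inter>\<K> \<inter> G \<subseteq> U \<longrightarrow> (\<exists>K\<in>\<K>. K \<inter> G \<subseteq> U))"

section \<open>The poset J = N \<times> (N \<union> {\<omega>}); \<omega> is \<infinity> :: enat\<close>

definition J_le :: "nat \<times> enat \<Rightarrow> nat \<times> enat \<Rightarrow> bool" where
  "J_le a b \<longleftrightarrow> (case a of (j, k) \<Rightarrow> case b of (m, n) \<Rightarrow>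
      (j = m \<and> k \<le> n) \<or> (n = \<infinity> \<and> k \<le> enat m))"

end

(*
  A directed subset of J either has a greatest element or is a cofinal subset of a column
  {j} x N, whose supremum is the top (j, omega) of that column. Hence a set is Scott open iff
  it is an upper set containing a finite point of each column whose top it contains, and a
  nonempty open set contains all but finitely many tops (m, omega), because (j, k) <= (m, omega)
  for m >= k. It follows that an upper set is compact iff it has finite points in only finitely
  many columns; this survives intersections, which gives coherence. For compact saturated G and
  nonempty open U, the set G - U lies below finitely many of its own points, so a filtered family
  of compact saturated sets each meeting G - U has a common point there: this is
  S*-well-filteredness. The chain (0, k) and the point (1, 1) violate the strong d-space property
  with U empty, and strong well-filteredness would imply that property, because principal
  upper sets are compact saturated and form a filtered family along a directed set.
*)

theory Submission
  imports Defs
begin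

lemma spec_le_iff_openin:
  "spec_le X x y \<longleftrightarrow> x \<in> topspace X \<and> y \<in> topspace X \<and> (\<forall>U. openin X U \<and> x \<in> U \<longrightarrow> y \<in> U)"
  unfolding spec_le_def in_closure_of by auto

lemma openin_spec_le_upward: "openin X U \<Longrightarrow> x \<in> U \<Longrightarrow> spec_le X x y \<Longrightarrow> y \<in> U"
  by (auto simp: spec_le_iff_openin)

lemma spec_le_refl: "x \<in> topspace X \<Longrightarrow> spec_le X x x"
  by (simp add: spec_le_iff_openin)

lemma spec_le_trans: "spec_le X x y \<Longrightarrow> spec_le X y z \<Longrightarrow> spec_le X x z"
  by (simp add: spec_le_iff_openin)

lemma upset_singleton_in_Kset:
  assumes "x \<in> topspace X"
  shows "upset X {x} \<in> Kset X"
proof -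
  have x_in: "x \<in> upset X {x}"
    using assms spec_le_refl by (auto simp: upset_def)
  have "compactin X (upset X {x})"
    unfolding compactin_def
  proof (intro conjI allI impI)
    fix \<U> assume \<U>: "(\<forall>U\<in>\<U>. openin X U) \<and> upset X {x} \<subseteq> \<Union>\<U>"
    then obtain U where "U \<in> \<U>" "x \<in> U" using x_in by blast
    moreover have "upset X {x} \<subseteq> U"
      using \<U> \<open>U \<in> \<U>\<close> \<open>x \<in> U\<close> openin_spec_le_upward by (fastforce simp: upset_def)
    ultimately show "\<exists>\<F>. finite \<F> \<and> \<F> \<subseteq> \<U> \<and> upset X {x} \<subseteq> \<Union>\<F>"
      by (intro exI[of _ "{U}"]) auto
  qed (auto simp: upset_def)
  moreover have "saturated X (upset X {x})"
    using spec_le_refl spec_le_trans by (fastforce simp: saturated_def upset_def)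
  ultimately show ?thesis
    using x_in by (auto simp: Kset_def)
qed

lemma saturated_upward: "saturated X K \<Longrightarrow> x \<in> K \<Longrightarrow> spec_le X x y \<Longrightarrow> y \<in> K"
  unfolding saturated_def upset_def spec_le_def by blast

lemma upset_singleton_antimono: "spec_le X x y \<Longrightarrow> upset X {y} \<subseteq> upset X {x}"
  unfolding upset_def using spec_le_trans by fastforce

lemma compactinI_open_upset:
  assumes "K \<subseteq> topspace X"
    and cover: "\<And>U. openin X U \<Longrightarrow> U \<inter> K \<noteq> {} \<Longrightarrow>
      \<exists>P. finite P \<and> P \<subseteq> K \<and> K \<subseteq> U \<union> upset X P"
  shows "compactin X K"
  unfolding compactin_def
proof (intro conjI allI impI)
  show "K \<subseteq> topspace X" by fact
  fix \<U> assume \<U>: "(\<forall>U\<in>\<U>. openin X U) \<and> K \<subseteq> \<Union>\<U>"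
  show "\<exists>\<F>. finite \<F> \<and> \<F> \<subseteq> \<U> \<and> K \<subseteq> \<Union>\<F>"
  proof (cases "K = {}")
    case True
    then show ?thesis by blast
  next
    case False
    have "\<forall>p\<in>K. \<exists>U. U \<in> \<U> \<and> p \<in> U"
      using \<U> by blast
    then obtain V where V: "\<forall>p\<in>K. V p \<in> \<U> \<and> p \<in> V p"
      by (metis bchoice)
    obtain p0 where "p0 \<in> K"
      using False by blast
    have V0: "openin X (V p0)" "V p0 \<inter> K \<noteq> {}"
      using V \<U> \<open>p0 \<in> K\<close> by blast+
    obtain P where P: "finite P" "P \<subseteq> K" "K \<subseteq> V p0 \<union> upset X P"
      using cover[OF V0] by blast
    have "upset X P \<subseteq> \<Union> (V ` P)"
    proof
      fix y assume "y \<in> upset X P"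
      then obtain p where "p \<in> P" "spec_le X p y"
        unfolding upset_def by blast
      then have "p \<in> K"
        using P(2) by blast
      then have "openin X (V p)" "p \<in> V p"
        using V \<U> by auto
      then have "y \<in> V p"
        using \<open>spec_le X p y\<close> by (rule openin_spec_le_upward)
      then show "y \<in> \<Union> (V ` P)"
        using \<open>p \<in> P\<close> by blast
    qed
    then have "K \<subseteq> \<Union> (V ` insert p0 P)"
      using P(3) by auto
    moreover have "V ` insert p0 P \<subseteq> \<U>"
      using P(2) V \<open>p0 \<in> K\<close> by auto
    moreover have "finite (V ` insert p0 P)"
      using P(1) by simp
    ultimately show ?thesis
      by blast
  qed
qed

lemma directed_relE:
  assumes "directed_rel le D" "x \<in> D" "y \<in> D"
  obtains z where "z \<in> D" "le x z" "le y z"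
  using assms unfolding directed_rel_def by blast

lemma strongly_well_filtered_imp_strong_d_space:
  assumes "strongly_well_filtered X"
  shows "strong_d_space X"
  unfolding strong_d_space_def
proof (intro allI impI, elim conjE)
  fix D x U
  assume D: "D \<subseteq> topspace X" "directed_rel (spec_le X) D" and x: "x \<in> topspace X"
    and U: "openin X U" "(\<Inter>d\<in>D. upset X {d}) \<inter> upset X {x} \<subseteq> U"
  let ?\<K> = "(\<lambda>d. upset X {d}) ` D"
  have "filtered_family ?\<K>"
    unfolding filtered_family_def
  proof (intro conjI ballI)
    fix K1 K2 assume "K1 \<in> ?\<K>" "K2 \<in> ?\<K>"
    then obtain d1 d2 where "d1 \<in> D" "d2 \<in> D" "K1 = upset X {d1}" "K2 = upset X {d2}"
      by blast
    moreover obtain d3 where "d3 \<in> D" "spec_le X d1 d3" "spec_le X d2 d3"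
      using D(2) \<open>d1 \<in> D\<close> \<open>d2 \<in> D\<close> by (rule directed_relE)
    ultimately have "upset X {d3} \<subseteq> K1 \<inter> K2"
      using upset_singleton_antimono by (metis le_inf_iff)
    then show "\<exists>K3\<in>?\<K>. K3 \<subseteq> K1 \<inter> K2"
      using \<open>d3 \<in> D\<close> by blast
  qed (use D(2) in \<open>simp add: directed_rel_def\<close>)
  moreover have "?\<K> \<subseteq> Kset X"
    using D(1) by (auto intro!: upset_singleton_in_Kset)
  ultimately have "\<exists>K\<in>?\<K>. K \<inter> upset X {x} \<subseteq> U"
    using assms U upset_singleton_in_Kset[OF x]
    unfolding strongly_well_filtered_def by (elim allE[of _ ?\<K>] allE[of _ "upset X {x}"] allE[of _ U]) simp
  then show "\<exists>d\<in>D. upset X {d} \<inter> upset X {x} \<subseteq> U"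
    by blast
qed

lemma filtered_family_finite_lower_bound:
  assumes "filtered_family \<K>" "finite \<S>" "\<S> \<subseteq> \<K>"
  shows "\<exists>K\<in>\<K>. \<forall>K'\<in>\<S>. K \<subseteq> K'"
  using assms(2,3)
proof (induction \<S> rule: finite_induct)
  case empty
  then show ?case using assms(1) unfolding filtered_family_def by blast
next
  case (insert A \<S>)
  then obtain K where "K \<in> \<K>" "\<forall>K'\<in>\<S>. K \<subseteq> K'" by blast
  moreover obtain K' where "K' \<in> \<K>" "K' \<subseteq> K \<inter> A"
    using assms(1) \<open>K \<in> \<K>\<close> insert.prems unfolding filtered_family_def by blast
  ultimately show ?case by blast
qed

lemma filtered_family_common_point:
  assumes "filtered_family \<K>" "finite B" "\<And>K. K \<in> \<K> \<Longrightarrow> K \<inter> B \<noteq> {}"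
  shows "\<Inter>\<K> \<inter> B \<noteq> {}"
proof
  assume "\<Inter>\<K> \<inter> B = {}"
  then have "\<forall>b\<in>B. \<exists>K\<in>\<K>. b \<notin> K"
    by blast
  then obtain f where f: "\<And>b. b \<in> B \<Longrightarrow> f b \<in> \<K> \<and> b \<notin> f b"
    by metis
  obtain K where "K \<in> \<K>" "\<forall>K'\<in>f ` B. K \<subseteq> K'"
    using filtered_family_finite_lower_bound[OF assms(1), of "f ` B"] assms(2) f by blast
  then show False
    using assms(3) f by blast
qed

lemma S_star_well_filteredI_finite_dominating:
  assumes dom: "\<And>G U. G \<in> Kset X \<Longrightarrow> openin X U \<Longrightarrow> U \<noteq> {} \<Longrightarrow>
      \<exists>B. finite B \<and> B \<subseteq> G - U \<and> (\<forall>p\<in>G - U. \<exists>b\<in>B. spec_le X p b)"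
  shows "S_star_well_filtered X"
  unfolding S_star_well_filtered_def
proof (intro allI impI, elim conjE)
  fix \<K> G U
  assume \<K>: "\<K> \<subseteq> Kset X" "filtered_family \<K>" and G: "G \<in> Kset X"
    and U: "openin X U" "U \<noteq> {}" "\<Inter>\<K> \<inter> G \<subseteq> U"
  obtain B where B: "finite B" "B \<subseteq> G - U" "\<forall>p\<in>G - U. \<exists>b\<in>B. spec_le X p b"
    using dom[OF G U(1,2)] by blast
  show "\<exists>K\<in>\<K>. K \<inter> G \<subseteq> U"
  proof (rule ccontr)
    assume "\<not> (\<exists>K\<in>\<K>. K \<inter> G \<subseteq> U)"
    have "K \<inter> B \<noteq> {}" if "K \<in> \<K>" for K
    proof -
      obtain p where "p \<in> K" "p \<in> G - U"
        using \<open>\<not> (\<exists>K\<in>\<K>. K \<inter> G \<subseteq> U)\<close> \<open>K \<in> \<K>\<close> by blast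
      then obtain b where "b \<in> B" "spec_le X p b"
        using B(3) by blast
      have "saturated X K"
        using \<K>(1) \<open>K \<in> \<K>\<close> by (auto simp: Kset_def)
      then have "b \<in> K"
        using \<open>p \<in> K\<close> \<open>spec_le X p b\<close> by (rule saturated_upward)
      then show ?thesis using \<open>b \<in> B\<close> by blast
    qed
    then have "\<Inter>\<K> \<inter> B \<noteq> {}"
      using filtered_family_common_point[OF \<K>(2) B(1)] by blast
    then show False
      using B(2) U(3) by blast
  qed
qed

lemma is_sup_rel_unique:
  assumes "\<And>x y. le x y \<Longrightarrow> le y x \<Longrightarrow> x = y" "is_sup_rel le D s" "is_sup_rel le D t"
  shows "s = t"
  using assms unfolding is_sup_rel_def by blast

lemma istopology_scott_open: "istopology (scott_open le)"
  unfolding istopology_def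
proof (intro conjI allI impI)
  fix S T assume S: "scott_open le S" and T: "scott_open le T"
  show "scott_open le (S \<inter> T)"
    unfolding scott_open_def
  proof (intro conjI allI impI)
    fix x y assume "x \<in> S \<inter> T \<and> le x y"
    then show "y \<in> S \<inter> T"
      using S T unfolding scott_open_def by blast
  next
    fix D s assume Ds: "directed_rel le D \<and> is_sup_rel le D s \<and> s \<in> S \<inter> T"
    then obtain d1 d2 where "d1 \<in> D" "d1 \<in> S" "d2 \<in> D" "d2 \<in> T"
      using S T unfolding scott_open_def by blast
    moreover obtain d3 where "d3 \<in> D" "le d1 d3" "le d2 d3"
      using conjunct1[OF Ds] \<open>d1 \<in> D\<close> \<open>d2 \<in> D\<close> by (rule directed_relE)
    ultimately show "D \<inter> (S \<inter> T) \<noteq> {}"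
      using S T unfolding scott_open_def by blast
  qed
next
  fix \<S> assume "\<forall>S\<in>\<S>. scott_open le S"
  then show "scott_open le (\<Union>\<S>)"
    unfolding scott_open_def by blast
qed

lemma openin_scott_topology: "openin (scott_topology le) = scott_open le"
  by (simp add: scott_topology_def istopology_scott_open)

lemma topspace_scott_topology: "topspace (scott_topology le) = UNIV"
proof -
  have "scott_open le UNIV"
    unfolding scott_open_def directed_rel_def by auto
  then show ?thesis
    unfolding topspace_def openin_scott_topology by auto
qed

lemma scott_open_not_below:
  assumes "\<And>x y z. le x y \<Longrightarrow> le y z \<Longrightarrow> le x z"
  shows "scott_open le {x. \<not> le x y}"
  unfolding scott_open_def is_sup_rel_def using assms by blast

lemma spec_le_scott_topology:
  assumes refl: "\<And>x. le x x" and trans: "\<And>x y z. le x y \<Longrightarrow> le y z \<Longrightarrow> le x z"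
  shows "spec_le (scott_topology le) = le"
proof (intro ext iffI)
  fix x y
  assume "spec_le (scott_topology le) x y"
  moreover have "scott_open le {z. \<not> le z y}"
    using trans by (rule scott_open_not_below)
  ultimately show "le x y"
    using refl[of y]
    unfolding spec_le_iff_openin openin_scott_topology by blast
next
  fix x y
  assume "le x y"
  then show "spec_le (scott_topology le) x y"
    unfolding spec_le_iff_openin openin_scott_topology topspace_scott_topology scott_open_def
    by blast
qed

section \<open>The dcpo J\<close>

lemma J_le_Pair [simp]: "J_le (j, k) (m, n) \<longleftrightarrow> (j = m \<and> k \<le> n) \<or> (n = \<infinity> \<and> k \<le> enat m)"
  by (simp add: J_le_def)

lemma J_le_refl: "J_le p p"
  by (cases p) simp

lemma J_le_trans: "J_le p q \<Longrightarrow> J_le q r \<Longrightarrow> J_le p r"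
  by (cases p; cases q; cases r) (auto intro: order_trans)

lemma J_le_antisym: "J_le p q \<Longrightarrow> J_le q p \<Longrightarrow> p = q"
  by (cases p; cases q) auto

lemma J_top_maximal: "J_le (m, \<infinity>) q \<Longrightarrow> q = (m, \<infinity>)"
  by (cases q) auto

lemma J_le_finite_fst: "J_le p (m, enat n) \<Longrightarrow> fst p = m"
  by (cases p) auto

lemma J_le_above_cofinal_column:
  assumes "\<forall>k. \<exists>k'\<ge>k. J_le (j, enat k') q"
  shows "q = (j, \<infinity>)"
proof (cases q)
  case (Pair m n)
  have "n = \<infinity>"
  proof (cases n)
    case (enat N)
    obtain k' where "k' \<ge> Suc N" "J_le (j, enat k') q"
      using assms by blast
    then show ?thesis
      using Pair enat by auto
  qed simp
  moreover obtain k' where "k' \<ge> Suc m" "J_le (j, enat k') q"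
    using assms by blast
  ultimately show ?thesis
    using Pair by auto
qed

lemma directed_rel_J_column: "directed_rel J_le (range (\<lambda>k. (j, enat k)))"
  unfolding directed_rel_def by simp (metis le_cases)

lemma is_sup_rel_J_cofinal_column:
  assumes "D \<subseteq> range (\<lambda>k. (j, enat k))" "\<forall>k. \<exists>k'\<ge>k. (j, enat k') \<in> D"
  shows "is_sup_rel J_le D (j, \<infinity>)"
  unfolding is_sup_rel_def
proof (intro conjI allI impI)
  show "\<forall>d\<in>D. J_le d (j, \<infinity>)"
    using assms(1) by auto
  fix u assume "\<forall>d\<in>D. J_le d u"
  then have "u = (j, \<infinity>)"
    using assms(2) by (blast intro: J_le_above_cofinal_column)
  then show "J_le (j, \<infinity>) u"
    by (simp add: J_le_refl)
qed

text \<open>Two elements of a directed set without a greatest element have a common upper bound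
  in it of finite height, which forces them into its column.\<close>

lemma J_directed_in_column:
  assumes D: "directed_rel J_le D" and no_greatest: "\<not> (\<exists>m\<in>D. \<forall>d\<in>D. J_le d m)"
  obtains j where "D \<subseteq> range (\<lambda>k. (j, enat k))"
proof -
  have finite_height: "snd d \<noteq> \<infinity>" if "d \<in> D" for d
  proof
    assume "snd d = \<infinity>"
    then obtain m where m: "d = (m, \<infinity>)"
      by (cases d) auto
    have "J_le d' d" if "d' \<in> D" for d'
    proof -
      obtain z where "z \<in> D" "J_le d' z" "J_le d z"
        using D \<open>d' \<in> D\<close> \<open>d \<in> D\<close> by (rule directed_relE)
      moreover have "z = d"
        using J_top_maximal[of m z] \<open>J_le d z\<close> m by simp
      ultimately show ?thesis
        by simp
    qed
    then show False
      using no_greatest \<open>d \<in> D\<close> by blast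
  qed
  have same_column: "fst d = fst d'" if dd': "d \<in> D" "d' \<in> D" for d d'
  proof -
    obtain z where "z \<in> D" "J_le d z" "J_le d' z"
      using D dd' by (rule directed_relE)
    moreover obtain m k where "z = (m, enat k)"
      using finite_height[OF \<open>z \<in> D\<close>] by (cases z; cases "snd z") auto
    ultimately have "J_le d (m, enat k)" "J_le d' (m, enat k)"
      by simp_all
    then show ?thesis
      using J_le_finite_fst by simp
  qed
  obtain d0 where "d0 \<in> D"
    using D unfolding directed_rel_def by blast
  have "D \<subseteq> range (\<lambda>k. (fst d0, enat k))"
  proof
    fix d assume "d \<in> D"
    then obtain k where "snd d = enat k"
      using finite_height by (meson not_infinity_eq)
    then have "d = (fst d0, enat k)"
      using same_column[OF \<open>d \<in> D\<close> \<open>d0 \<in> D\<close>] by (simp add: prod_eq_iff)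
    then show "d \<in> range (\<lambda>k. (fst d0, enat k))"
      by blast
  qed
  then show thesis
    using that by blast
qed

lemma J_directed_cases:
  assumes D: "directed_rel J_le D"
  obtains (greatest) m where "m \<in> D" "\<forall>d\<in>D. J_le d m"
    | (column) j where "D \<subseteq> range (\<lambda>k. (j, enat k))" "\<forall>k. \<exists>k'\<ge>k. (j, enat k') \<in> D"
proof (cases "\<exists>m\<in>D. \<forall>d\<in>D. J_le d m")
  case True
  then obtain m where "m \<in> D" "\<forall>d\<in>D. J_le d m"
    by blast
  then show ?thesis
    by (rule greatest)
next
  case False
  then obtain j where col: "D \<subseteq> range (\<lambda>k. (j, enat k))"
    by (rule J_directed_in_column[OF D])
  have "\<forall>k. \<exists>k'\<ge>k. (j, enat k') \<in> D"
  proof (rule ccontr)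
    assume "\<not> (\<forall>k. \<exists>k'\<ge>k. (j, enat k') \<in> D)"
    then obtain k where "\<forall>k'. (j, enat k') \<in> D \<longrightarrow> k' < k"
      using not_le by blast
    define S where "S = {k'. (j, enat k') \<in> D}"
    have "finite S"
      using \<open>\<forall>k'. (j, enat k') \<in> D \<longrightarrow> k' < k\<close>
      unfolding S_def by (auto intro: finite_subset[of _ "{..<k}"])
    have "D \<noteq> {}"
      using D unfolding directed_rel_def by blast
    then have "S \<noteq> {}"
      using col unfolding S_def by blast
    then have "(j, enat (Max S)) \<in> D"
      using Max_in[OF \<open>finite S\<close>] unfolding S_def by blast
    moreover have "J_le d (j, enat (Max S))" if "d \<in> D" for d
    proof -
      obtain k' where "d = (j, enat k')"
        using col \<open>d \<in> D\<close> by blast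
      then have "k' \<in> S"
        using \<open>d \<in> D\<close> unfolding S_def by simp
      then show ?thesis
        using \<open>finite S\<close> \<open>d = (j, enat k')\<close> by simp
    qed
    ultimately show False
      using False by blast
  qed
  with col show ?thesis
    by (rule column)
qed

lemma is_dcpo_J: "is_dcpo J_le"
  unfolding is_dcpo_def
proof (intro conjI allI impI)
  show "partial_order_on UNIV {(x, y). J_le x y}"
    unfolding partial_order_on_def preorder_on_def refl_on_def trans_def antisym_def
    using J_le_refl J_le_trans J_le_antisym by blast
next
  fix D assume "directed_rel J_le D"
  then show "\<exists>s. is_sup_rel J_le D s"
  proof (cases rule: J_directed_cases)
    case (greatest m)
    then show ?thesis
      unfolding is_sup_rel_def by blast
  next
    case (column j)
    then show ?thesis
      using is_sup_rel_J_cofinal_column by blast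
  qed
qed

section \<open>Scott open and compact saturated subsets of J\<close>

abbreviation ScottJ :: "(nat \<times> enat) topology" where
  "ScottJ \<equiv> scott_topology J_le"

lemma spec_le_ScottJ: "spec_le ScottJ = J_le"
  using J_le_refl J_le_trans by (rule spec_le_scott_topology)

lemma upset_ScottJ: "upset ScottJ A = {y. \<exists>x\<in>A. J_le x y}"
  unfolding upset_def spec_le_ScottJ topspace_scott_topology by simp

lemma saturated_ScottJ_iff: "saturated ScottJ K \<longleftrightarrow> (\<forall>x y. x \<in> K \<and> J_le x y \<longrightarrow> y \<in> K)"
  unfolding saturated_def upset_ScottJ topspace_scott_topology using J_le_refl by blast

lemma openin_ScottJ_iff:
  "openin ScottJ U \<longleftrightarrow>
    (\<forall>x y. x \<in> U \<and> J_le x y \<longrightarrow> y \<in> U) \<and> (\<forall>j. (j, \<infinity>) \<in> U \<longrightarrow> (\<exists>k. (j, enat k) \<in> U))"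
  unfolding openin_scott_topology
proof
  assume U: "scott_open J_le U"
  have "\<exists>k. (j, enat k) \<in> U" if "(j, \<infinity>) \<in> U" for j
  proof -
    have "directed_rel J_le (range (\<lambda>k. (j, enat k)))"
      by (rule directed_rel_J_column)
    moreover have "is_sup_rel J_le (range (\<lambda>k. (j, enat k))) (j, \<infinity>)"
      by (rule is_sup_rel_J_cofinal_column) auto
    ultimately show ?thesis
      using U that unfolding scott_open_def by blast
  qed
  then show "(\<forall>x y. x \<in> U \<and> J_le x y \<longrightarrow> y \<in> U) \<and> (\<forall>j. (j, \<infinity>) \<in> U \<longrightarrow> (\<exists>k. (j, enat k) \<in> U))"
    using U unfolding scott_open_def by blast
next
  assume "(\<forall>x y. x \<in> U \<and> J_le x y \<longrightarrow> y \<in> U) \<and> (\<forall>j. (j, \<infinity>) \<in> U \<longrightarrow> (\<exists>k. (j, enat k) \<in> U))"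
  then have upper: "\<And>x y. x \<in> U \<Longrightarrow> J_le x y \<Longrightarrow> y \<in> U"
    and approx: "\<And>j. (j, \<infinity>) \<in> U \<Longrightarrow> \<exists>k. (j, enat k) \<in> U"
    by blast+
  have "D \<inter> U \<noteq> {}" if D: "directed_rel J_le D" and s: "is_sup_rel J_le D s" "s \<in> U" for D s
    using D
  proof (cases rule: J_directed_cases)
    case (greatest m)
    then have "is_sup_rel J_le D m"
      unfolding is_sup_rel_def by blast
    with J_le_antisym have "m = s"
      using s(1) by (rule is_sup_rel_unique)
    then show ?thesis
      using greatest s(2) by blast
  next
    case (column j)
    have "s = (j, \<infinity>)"
      using J_le_antisym s(1) is_sup_rel_J_cofinal_column[OF column] by (rule is_sup_rel_unique)
    then obtain k where "(j, enat k) \<in> U"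
      using approx s(2) by blast
    moreover obtain k' where "k' \<ge> k" "(j, enat k') \<in> D"
      using column(2) by blast
    ultimately show ?thesis
      using upper[of "(j, enat k)" "(j, enat k')"] by auto
  qed
  then show "scott_open J_le U"
    unfolding scott_open_def using upper by blast
qed

lemma openin_ScottJ_upward: "openin ScottJ U \<Longrightarrow> x \<in> U \<Longrightarrow> J_le x y \<Longrightarrow> y \<in> U"
  unfolding openin_ScottJ_iff by blast

lemma openin_ScottJ_contains_tops:
  assumes "openin ScottJ U" "U \<noteq> {}"
  obtains n0 where "\<And>m. m \<ge> n0 \<Longrightarrow> (m, \<infinity>) \<in> U"
proof -
  obtain j k where "(j, enat k) \<in> U"
  proof -
    obtain j n where "(j, n) \<in> U"
      using assms(2) by auto
    then show thesis
      using that assms(1) unfolding openin_ScottJ_iff by (cases n) auto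
  qed
  then have "(m, \<infinity>) \<in> U" if "m \<ge> k" for m
    using openin_ScottJ_upward[OF assms(1)] that by simp
  then show thesis
    using that by blast
qed

definition fin_columns :: "(nat \<times> enat) set \<Rightarrow> nat set" where
  "fin_columns K = {j. \<exists>k. (j, enat k) \<in> K}"

definition column_min :: "(nat \<times> enat) set \<Rightarrow> nat \<Rightarrow> nat" where
  "column_min K j = (LEAST k. (j, enat k) \<in> K)"

lemma column_min_in: "j \<in> fin_columns K \<Longrightarrow> (j, enat (column_min K j)) \<in> K"
  unfolding fin_columns_def column_min_def by (auto intro: LeastI)

lemma column_min_le: "(j, enat k) \<in> K \<Longrightarrow> column_min K j \<le> k"
  unfolding column_min_def by (rule Least_le)

lemma ScottJ_cover_by_open_and_finite_upset:
  assumes K: "saturated ScottJ K" "finite (fin_columns K)"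
    and U: "openin ScottJ U" "U \<noteq> {}"
  shows "\<exists>P. finite P \<and> P \<subseteq> K \<and> K \<subseteq> U \<union> upset ScottJ P"
proof -
  obtain n0 where n0: "\<And>m. m \<ge> n0 \<Longrightarrow> (m, \<infinity>) \<in> U"
    using openin_ScottJ_contains_tops[OF U] by blast
  define P where "P = (\<lambda>j. (j, enat (column_min K j))) ` fin_columns K
    \<union> K \<inter> (\<lambda>m. (m, \<infinity>)) ` {..<n0}"
  have "finite P"
    using K(2) unfolding P_def by blast
  moreover have "P \<subseteq> K"
    using column_min_in unfolding P_def by blast
  moreover have "K \<subseteq> U \<union> upset ScottJ P"
  proof
    fix x assume "x \<in> K"
    obtain j n where x: "x = (j, n)"
      by fastforce
    show "x \<in> U \<union> upset ScottJ P"
    proof (cases n)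
      case (enat k)
      then have "j \<in> fin_columns K" "column_min K j \<le> k"
        using \<open>x \<in> K\<close> x column_min_le unfolding fin_columns_def by auto
      then have "(j, enat (column_min K j)) \<in> P" "J_le (j, enat (column_min K j)) x"
        using x enat unfolding P_def by auto
      then show ?thesis
        unfolding upset_ScottJ by blast
    next
      case infinity
      show ?thesis
      proof (cases "j < n0")
        case True
        then have "x \<in> P"
          using \<open>x \<in> K\<close> x infinity unfolding P_def by blast
        then show ?thesis
          unfolding upset_ScottJ using J_le_refl by blast
      next
        case False
        then show ?thesis
          using n0 x infinity by simp
      qed
    qed
  qed
  ultimately show ?thesis
    by blast
qed

lemma compactin_ScottJ_if_finite_columns:
  assumes "saturated ScottJ K" "finite (fin_columns K)"
  shows "compactin ScottJ K"
proof (rule compactinI_open_upset)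
  show "K \<subseteq> topspace ScottJ"
    by (simp add: topspace_scott_topology)
  fix U assume "openin ScottJ U" "U \<inter> K \<noteq> {}"
  then show "\<exists>P. finite P \<and> P \<subseteq> K \<and> K \<subseteq> U \<union> upset ScottJ P"
    using assms ScottJ_cover_by_open_and_finite_upset by blast
qed

text \<open>If \<open>K\<close> meets infinitely many columns in finite heights, the open sets \<open>W j\<close> cover \<open>K\<close>,
  but the lowest point of \<open>K\<close> in column \<open>m\<close> lies only in \<open>W m\<close>.\<close>

lemma finite_columns_if_compactin_ScottJ:
  assumes "compactin ScottJ K"
  shows "finite (fin_columns K)"
proof (rule ccontr)
  assume infinite: "infinite (fin_columns K)"
  define h where "h m = (if m \<in> fin_columns K then Suc (column_min K m) else 0)" for m
  define W where "W j = {p. (fst p = j \<and> enat (column_min K j) \<le> snd p) \<or> enat (h (fst p)) \<le> snd p}"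
    for j
  have W_open: "openin ScottJ (W j)" for j
    unfolding openin_ScottJ_iff
  proof (intro conjI allI impI)
    fix x y assume "x \<in> W j \<and> J_le x y"
    then show "y \<in> W j"
      unfolding W_def by (cases x; cases y) (auto intro: order_trans)
  next
    fix m assume "(m, \<infinity>) \<in> W j"
    show "\<exists>k. (m, enat k) \<in> W j"
      by (rule exI[of _ "h m"]) (simp add: W_def)
  qed
  have W_cover: "K \<subseteq> \<Union> (W ` fin_columns K)"
  proof
    fix x assume "x \<in> K"
    obtain a b where x: "x = (a, b)"
      by fastforce
    show "x \<in> \<Union> (W ` fin_columns K)"
    proof (cases b)
      case (enat k)
      then have "a \<in> fin_columns K" "column_min K a \<le> k"
        using \<open>x \<in> K\<close> x column_min_le unfolding fin_columns_def by auto
      then show ?thesis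
        unfolding W_def using x enat by auto
    next
      case infinity
      obtain j where "j \<in> fin_columns K"
        using infinite_imp_nonempty[OF infinite] by blast
      then show ?thesis
        unfolding W_def using x infinity by auto
    qed
  qed
  have "\<exists>\<F>. finite \<F> \<and> \<F> \<subseteq> W ` fin_columns K \<and> K \<subseteq> \<Union>\<F>"
    using W_open W_cover by (intro compactinD[OF assms]) auto
  then obtain J0 where J0: "finite J0" "J0 \<subseteq> fin_columns K" "K \<subseteq> \<Union> (W ` J0)"
    unfolding ex_finite_subset_image by blast
  have "infinite (fin_columns K - J0)"
    using Diff_infinite_finite[OF J0(1) infinite] .
  then obtain m where m: "m \<in> fin_columns K" "m \<notin> J0"
    using infinite_imp_nonempty by blast
  then obtain j where "j \<in> J0" "(m, enat (column_min K m)) \<in> W j"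
    using J0(3) column_min_in by blast
  then show False
    unfolding W_def h_def using m by auto
qed

lemma Kset_ScottJ_iff:
  "K \<in> Kset ScottJ \<longleftrightarrow> K \<noteq> {} \<and> saturated ScottJ K \<and> finite (fin_columns K)"
  unfolding Kset_def mem_Collect_eq
  using compactin_ScottJ_if_finite_columns finite_columns_if_compactin_ScottJ by blast

lemma coherent_space_ScottJ: "coherent_space ScottJ"
  unfolding coherent_space_def
proof (intro allI impI, elim conjE)
  fix K L
  assume "compactin ScottJ K" "saturated ScottJ K" "saturated ScottJ L"
  have "fin_columns (K \<inter> L) \<subseteq> fin_columns K"
    unfolding fin_columns_def by blast
  then have "finite (fin_columns (K \<inter> L))"
    using finite_columns_if_compactin_ScottJ[OF \<open>compactin ScottJ K\<close>] by (rule finite_subset)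
  moreover have "saturated ScottJ (K \<inter> L)"
    using \<open>saturated ScottJ K\<close> \<open>saturated ScottJ L\<close> unfolding saturated_ScottJ_iff by blast
  ultimately show "compactin ScottJ (K \<inter> L)"
    by (rule compactin_ScottJ_if_finite_columns[rotated])
qed

section \<open>Well-filteredness properties of the Scott space of J\<close>

text \<open>The set \<open>B\<close> below is finite: only finitely many maximal points lie outside \<open>U\<close>, and in a
  column whose top is in \<open>U\<close> only finitely many heights do. Every other point of \<open>G - U\<close> lies
  below the top of its column, which belongs to \<open>B\<close>.\<close>

lemma ScottJ_compact_minus_open_dominated:
  assumes G: "G \<in> Kset ScottJ" and U: "openin ScottJ U" "U \<noteq> {}"
  shows "\<exists>B. finite B \<and> B \<subseteq> G - U \<and> (\<forall>p\<in>G - U. \<exists>b\<in>B. J_le p b)"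
proof -
  have G_upper: "\<And>x y. x \<in> G \<Longrightarrow> J_le x y \<Longrightarrow> y \<in> G" and G_fin: "finite (fin_columns G)"
    using G unfolding Kset_ScottJ_iff saturated_ScottJ_iff by blast+
  obtain n0 where n0: "\<And>m. m \<ge> n0 \<Longrightarrow> (m, \<infinity>) \<in> U"
    using openin_ScottJ_contains_tops[OF U] by blast
  define c where "c j = (LEAST k. (j, enat k) \<in> U)" for j
  have c_in: "(j, enat (c j)) \<in> U" if "(j, \<infinity>) \<in> U" for j
  proof -
    have "\<exists>k. (j, enat k) \<in> U"
      using that U(1) unfolding openin_ScottJ_iff by blast
    then show ?thesis
      unfolding c_def by (rule LeastI_ex)
  qed
  define B where "B = {p \<in> G - U. snd p = \<infinity> \<or> (fst p, \<infinity>) \<in> U}"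
  have "B \<subseteq> (\<lambda>m. (m, \<infinity>)) ` {..<n0} \<union> (\<Union>j\<in>fin_columns G. (\<lambda>k. (j, enat k)) ` {..<c j})"
  proof
    fix p assume "p \<in> B"
    obtain j n where p: "p = (j, n)"
      by fastforce
    show "p \<in> (\<lambda>m. (m, \<infinity>)) ` {..<n0} \<union> (\<Union>j\<in>fin_columns G. (\<lambda>k. (j, enat k)) ` {..<c j})"
    proof (cases n)
      case infinity
      then have "(j, \<infinity>) \<notin> U"
        using \<open>p \<in> B\<close> p unfolding B_def by simp
      then have "j < n0"
        using n0 not_le by blast
      then show ?thesis
        using p infinity by blast
    next
      case (enat k)
      then have "j \<in> fin_columns G" "(j, \<infinity>) \<in> U" "p \<notin> U"
        using \<open>p \<in> B\<close> p unfolding B_def fin_columns_def by auto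
      moreover have "k < c j"
      proof (rule ccontr)
        assume "\<not> k < c j"
        then have "J_le (j, enat (c j)) p"
          using p enat by simp
        then show False
          using openin_ScottJ_upward[OF U(1) c_in[OF \<open>(j, \<infinity>) \<in> U\<close>]] \<open>p \<notin> U\<close> by blast
      qed
      ultimately show ?thesis
        using p enat by blast
    qed
  qed
  then have "finite B"
    by (rule finite_subset) (use G_fin in simp)
  moreover have "\<exists>b\<in>B. J_le p b" if "p \<in> G - U" for p
  proof (cases "p \<in> B")
    case True
    then show ?thesis
      using J_le_refl by blast
  next
    case False
    obtain j n where p: "p = (j, n)"
      by fastforce
    have "J_le p (j, \<infinity>)"
      using p by simp
    then have "(j, \<infinity>) \<in> G"
      using G_upper that by blast
    moreover have "(j, \<infinity>) \<notin> U"
      using False that p unfolding B_def by auto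
    ultimately show ?thesis
      using \<open>J_le p (j, \<infinity>)\<close> unfolding B_def by force
  qed
  ultimately show ?thesis
    unfolding B_def by blast
qed

lemma S_star_well_filtered_ScottJ: "S_star_well_filtered ScottJ"
  using ScottJ_compact_minus_open_dominated
  by (intro S_star_well_filteredI_finite_dominating) (simp add: spec_le_ScottJ)

text \<open>The chain \<open>(0, k)\<close> and the point \<open>(1, 1)\<close> witness the failure: the upper sets of the chain
  meet only in \<open>(0, \<omega>)\<close>, which is not above \<open>(1, 1)\<close>, while each \<open>\<up>(0, k)\<close> meets \<open>\<up>(1, 1)\<close> in
  \<open>(k + 1, \<omega>)\<close>.\<close>

lemma not_strong_d_space_ScottJ: "\<not> strong_d_space ScottJ"
proof
  assume strong_d: "strong_d_space ScottJ"
  let ?D = "range (\<lambda>k. (0::nat, enat k))"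
  have "directed_rel J_le ?D"
    by (rule directed_rel_J_column)
  moreover have "(\<Inter>d\<in>?D. upset ScottJ {d}) \<inter> upset ScottJ {(1, enat 1)} \<subseteq> {}"
  proof
    fix y assume y: "y \<in> (\<Inter>d\<in>?D. upset ScottJ {d}) \<inter> upset ScottJ {(1, enat 1)}"
    obtain m n where "y = (m, n)"
      by fastforce
    moreover have "J_le (0, enat (Suc m)) y" "J_le (1, enat 1) y"
      using y unfolding upset_ScottJ by auto
    ultimately show "y \<in> {}"
      by (cases n) auto
  qed
  ultimately obtain k where "upset ScottJ {(0, enat k)} \<inter> upset ScottJ {(1, enat 1)} \<subseteq> {}"
    using strong_d unfolding strong_d_space_def spec_le_ScottJ topspace_scott_topology
    by (elim allE[of _ ?D] allE[of _ "(1, enat 1)"] allE[of _ "{}"]) auto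
  moreover have "(Suc k, \<infinity>) \<in> upset ScottJ {(0, enat k)} \<inter> upset ScottJ {(1, enat 1)}"
    unfolding upset_ScottJ by simp
  ultimately show False
    by blast
qed

theorem mainTheorem13:
  shows "is_dcpo J_le
    \<and> coherent_space (scott_topology J_le)
    \<and> S_star_well_filtered (scott_topology J_le)
    \<and> \<not> strong_d_space (scott_topology J_le)
    \<and> \<not> strongly_well_filtered (scott_topology J_le)"
  using is_dcpo_J coherent_space_ScottJ S_star_well_filtered_ScottJ not_strong_d_space_ScottJ
    strongly_well_filtered_imp_strong_d_space by blast

end
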